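(* Let $R=\{r_{ab}\}_{N\times N}$ be the transition rate matrix of an irreducible continuous-time Markov jump process on states $\{1,\dots,N\}$: for $a\neq b$, $r_{ab}\ge 0$ is the rate of jumps from $b$ to $a$, and $r_{bb}=-\sum_{a\neq b} r_{ab}$. Let $\boldsymbol{\pi}$ be the unique stationary distribution ($R\boldsymbol{\pi}=0$, $\boldsymbol{1}^\top\boldsymbol{\pi}=1$), and let $Z=\int_0^\infty\left(e^{Rt}-\boldsymbol{\pi}\boldsymbol{1}^\top\right)\mathrm{d}t$ be the fundamental matrix. Fix distinct states $i\neq j$ and states $k,l$ different from $i$ and $j$. Regard $R$ (and hence $\boldsymbol{\pi}$ and $Z$) as a function of the single off-diagonal rate $r_{ij}>0$, with all other off-diagonal rates held fixed and the diagonal entry $r_{jj}=-\sum_{a\neq j}r_{aj}$ adjusted accordingly, so that $\frac{\mathrm{d}R}{\mathrm{d}r_{ij}}=E_{ij}-E_{jj}$, where $E_{ab}$ denotes the matrix unit with a $1$ in position $(a,b)$. Define $$\chi_{ij}^{kl}=\frac{Z_{ki}-Z_{kj}}{Z_{li}-Z_{lj}}.$$ Then, at every value of $r_{ij}$ where $Z_{li}-Z_{lj}\neq 0$, $\chi_{ij}^{kl}$ is independent of $r_{ij}$, i.e. $\frac{\mathrm{d}\chi_{ij}^{kl}}{\mathrm{d}r_{ij}}=0$.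
   Context: The ratio $\chi_{ij}^{kl}$ equals the long-time limit of the ratio of the responses $\frac{\mathrm{d}}{\mathrm{d}r_{ij}}\langle \tau_k(\tau)\rangle/\frac{\mathrm{d}}{\mathrm{d}r_{ij}}\langle \tau_l(\tau)\rangle$ of the total dwelling times in states $k$ and $l$ up to time $\tau$. Irreducibility is assumed throughout, so the stationary distribution is unique and $\lim_{t\to\infty}e^{Rt}=\boldsymbol{\pi}\boldsymbol{1}^\top$; $\boldsymbol{1}$ is the all-ones column vector. *)

theory Defs
  imports "HOL-Analysis.Analysis"
begin

text \<open>States are the elements of a finite type 'n (so N = CARD('n)).
  Matrices are real^'n^'n, with M $ a $ b the (a,b) entry; ** is matrix product.\<close>

definition mpow :: "real^'n^'n \<Rightarrow> nat \<Rightarrow> real^'n^'n" where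
  "mpow A n = ((\<lambda>M. A ** M) ^^ n) (mat 1)"

definition mexp :: "real \<Rightarrow> real^'n^'n \<Rightarrow> real^'n^'n" where
  "mexp t A = (\<chi> a b. \<Sum>n. (t ^ n / fact n) * (mpow A n $ a $ b))"

text \<open>Rate matrix: r_ab >= 0 off the diagonal is the rate of jumps b -> a,
  and the diagonal entries make the columns sum to zero.\<close>
definition rate_matrix :: "real^'n::finite^'n \<Rightarrow> bool" where
  "rate_matrix R \<longleftrightarrow> (\<forall>a b. a \<noteq> b \<longrightarrow> R $ a $ b \<ge> 0)
     \<and> (\<forall>b. R $ b $ b = - (\<Sum>a\<in>UNIV - {b}. R $ a $ b))"

definition irreducible_rates :: "real^'n::finite^'n \<Rightarrow> bool" where
  "irreducible_rates R \<longleftrightarrow>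
     (\<forall>a b. (b, a) \<in> {(y, x). x \<noteq> y \<and> R $ x $ y > 0}\<^sup>*)"

definition stat_dist :: "real^'n::finite^'n \<Rightarrow> real^'n" where
  "stat_dist R = (THE p. R *v p = 0 \<and> sum (\<lambda>a. p $ a) UNIV = 1)"

definition fund_matrix :: "real^'n::finite^'n \<Rightarrow> real^'n^'n" where
  "fund_matrix R = (\<chi> a b. integral {0..} (\<lambda>t. mexp t R $ a $ b - stat_dist R $ a))"

text \<open>The rate matrix as a function of the single rate r_ij = x, all other
  off-diagonal rates as in R0, diagonal entry r_jj adjusted:
  R(x) = R0 + (x - r_ij) (E_ij - E_jj).\<close>
definition vary_rate :: "real^'n::finite^'n \<Rightarrow> 'n \<Rightarrow> 'n \<Rightarrow> real \<Rightarrow> real^'n^'n" where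
  "vary_rate R0 i j x = (\<chi> a b.
      if a = i \<and> b = j then x
      else if a = j \<and> b = j then R0 $ j $ j + R0 $ i $ j - x
      else R0 $ a $ b)"

end

theory Submission
  imports Defs "HOL-Real_Asymp.Real_Asymp"
begin

text \<open>
  Let W be Z (e_i - e_j), the difference of columns i and j of the fundamental matrix.
  Because e^(tR) converges exponentially fast to pi 1^T on sum-zero vectors,
  W is the integral of e^(tR) (e_i - e_j) over [0, oo), and the fundamental theorem of
  calculus gives R W = -(e_i - e_j) and 1^T W = 0. These two equations determine W,
  since the kernel of an irreducible rate matrix meets the sum-zero hyperplane only in 0.
  Moving r_ij from x to y adds the rank-one matrix (y - x) (e_i - e_j) e_j^T to R, whose
  image is spanned by e_i - e_j again; so W(x) solves the equations for R(y) up to the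
  scalar factor 1 - (y - x) W_j(x), which cannot vanish. Hence W(y) is a nonzero multiple
  of W(x), and every ratio of entries of W, in particular chi, is independent of r_ij.

  The exponential convergence is a Doeblin argument: all entries of e^R are positive,
  so e^R contracts the l1 norm of sum-zero vectors by a fixed factor.
\<close>

lemma vector_derivative_zero_imp_constant:
  fixes f :: "real \<Rightarrow> 'a::real_normed_vector"
  assumes "\<And>t. (f has_vector_derivative 0) (at t)"
  shows "f t = f s"
proof -
  have "(f has_derivative (\<lambda>h. 0)) (at t within UNIV)" for t
    using assms[of t] by (simp add: has_vector_derivative_def)
  then obtain c where "\<forall>t\<in>UNIV. f t = c"
    using has_derivative_zero_constant[of UNIV f] by blast
  then show ?thesis by simp
qed

lemma integral_atLeast_has_vector_derivative:
  fixes f f' :: "real \<Rightarrow> 'a::euclidean_space"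
  assumes deriv: "\<And>t. a \<le> t \<Longrightarrow> (f has_vector_derivative f' t) (at t within {a..})"
    and int: "f' absolutely_integrable_on {a..}"
    and lim: "(f \<longlongrightarrow> L) at_top"
  shows "integral {a..} f' = L - f a"
proof -
  have "((\<lambda>b. set_lebesgue_integral lebesgue {a..b} f') \<longlongrightarrow> set_lebesgue_integral lebesgue {a..} f') at_top"
    by (rule tendsto_set_lebesgue_integral_at_top) (use int in auto)
  moreover have "set_lebesgue_integral lebesgue {a..b} f' = integral {a..b} f'" for b
    by (rule set_lebesgue_integral_eq_integral(2), rule set_integrable_subset[OF int]) auto
  ultimately have "((\<lambda>b. integral {a..b} f') \<longlongrightarrow> integral {a..} f') at_top"
    using set_lebesgue_integral_eq_integral(2)[OF int] by simp
  moreover have "\<forall>\<^sub>F b in at_top. integral {a..b} f' = f b - f a"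
  proof (rule eventually_mono[OF eventually_ge_at_top[of a]])
    fix b assume "a \<le> b"
    have "(f has_vector_derivative f' t) (at t within {a..b})" if "t \<in> {a..b}" for t
      using deriv[of t] that by (auto intro: has_vector_derivative_within_subset)
    with \<open>a \<le> b\<close> show "integral {a..b} f' = f b - f a"
      by (intro integral_unique fundamental_theorem_of_calculus) auto
  qed
  ultimately have "((\<lambda>b. f b - f a) \<longlongrightarrow> integral {a..} f') at_top"
    by (rule Lim_transform_eventually)
  moreover have "((\<lambda>b. f b - f a) \<longlongrightarrow> L - f a) at_top"
    by (intro tendsto_diff lim tendsto_const)
  ultimately show ?thesis
    using tendsto_unique by force
qed

section \<open>The matrix exponential\<close>

text \<open>
  On real^'n^'n the ring product is entrywise, so the matrix exponential is obtained from
  exp in the Banach algebra of bounded operators on real^'n: a copy of the blinfun type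
  with composition as product.
\<close>

typedef (overloaded) 'n endo = "UNIV :: ((real^'n::finite) \<Rightarrow>\<^sub>L (real^'n)) set"
  morphisms Rep_endo Abs_endo by simp

setup_lifting type_definition_endo

instantiation endo :: (finite) real_normed_vector
begin
lift_definition norm_endo :: "'a endo \<Rightarrow> real" is norm .
lift_definition minus_endo :: "'a endo \<Rightarrow> 'a endo \<Rightarrow> 'a endo" is "(-)" .
lift_definition plus_endo :: "'a endo \<Rightarrow> 'a endo \<Rightarrow> 'a endo" is "(+)" .
lift_definition uminus_endo :: "'a endo \<Rightarrow> 'a endo" is uminus .
lift_definition zero_endo :: "'a endo" is 0 .
lift_definition scaleR_endo :: "real \<Rightarrow> 'a endo \<Rightarrow> 'a endo" is scaleR .
definition dist_endo :: "'a endo \<Rightarrow> 'a endo \<Rightarrow> real" where "dist_endo a b = norm (a - b)"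
definition sgn_endo :: "'a endo \<Rightarrow> 'a endo" where "sgn_endo a = inverse (norm a) *\<^sub>R a"
definition uniformity_endo :: "('a endo \<times> 'a endo) filter" where
  "uniformity_endo = (INF e\<in>{0<..}. principal {(a, b). dist a b < e})"
definition open_endo :: "'a endo set \<Rightarrow> bool" where
  "open_endo U = (\<forall>a\<in>U. \<forall>\<^sub>F (a', b) in uniformity. a' = a \<longrightarrow> b \<in> U)"
instance
proof
  fix a b c :: "'a endo" and r s :: real
  show "a + b + c = a + (b + c)" by transfer (simp add: algebra_simps)
  show "a + b = b + a" by transfer (simp add: algebra_simps)
  show "0 + a = a" by transfer simp
  show "- a + a = 0" by transfer simp
  show "a - b = a + - b" by transfer simp
  show "r *\<^sub>R (a + b) = r *\<^sub>R a + r *\<^sub>R b" by transfer (simp add: algebra_simps)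
  show "(r + s) *\<^sub>R a = r *\<^sub>R a + s *\<^sub>R a" by transfer (simp add: algebra_simps)
  show "r *\<^sub>R s *\<^sub>R a = (r * s) *\<^sub>R a" by transfer simp
  show "1 *\<^sub>R a = a" by transfer simp
  show "dist a b = norm (a - b)" by (simp add: dist_endo_def)
  show "sgn a = inverse (norm a) *\<^sub>R a" by (simp add: sgn_endo_def)
  show "(uniformity :: ('a endo \<times> 'a endo) filter) = (INF e\<in>{0<..}. principal {(a, b). dist a b < e})"
    by (simp add: uniformity_endo_def)
  show "open U = (\<forall>a\<in>U. \<forall>\<^sub>F (a', b) in uniformity. a' = a \<longrightarrow> b \<in> U)" for U :: "'a endo set"
    by (simp add: open_endo_def)
  show "(norm a = 0) = (a = 0)" by transfer simp
  show "norm (a + b) \<le> norm a + norm b" by transfer (rule norm_triangle_ineq)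
  show "norm (r *\<^sub>R a) = \<bar>r\<bar> * norm a" by transfer simp
qed
end

instantiation endo :: (finite) real_normed_algebra_1
begin
lift_definition times_endo :: "'a endo \<Rightarrow> 'a endo \<Rightarrow> 'a endo" is blinfun_compose .
lift_definition one_endo :: "'a endo" is id_blinfun .
instance
proof
  fix a b c :: "'a endo" and r :: real
  show "a * b * c = a * (b * c)" by transfer (auto intro!: blinfun_eqI)
  show "(a + b) * c = a * c + b * c" by transfer (auto intro!: blinfun_eqI simp: blinfun.bilinear_simps)
  show "a * (b + c) = a * b + a * c" by transfer (auto intro!: blinfun_eqI simp: blinfun.bilinear_simps)
  show "1 * a = a" by transfer (auto intro!: blinfun_eqI)
  show "a * 1 = a" by transfer (auto intro!: blinfun_eqI)
  show "r *\<^sub>R a * b = r *\<^sub>R (a * b)" by transfer (auto intro!: blinfun_eqI simp: blinfun.bilinear_simps)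
  show "a * r *\<^sub>R b = r *\<^sub>R (a * b)" by transfer (auto intro!: blinfun_eqI simp: blinfun.bilinear_simps)
  show "norm (a * b) \<le> norm a * norm b" by transfer (rule norm_blinfun_compose)
  show "norm (1 :: 'a endo) = 1" by transfer simp
  show "(0 :: 'a endo) \<noteq> 1"
    by transfer (metis blinfun.zero_left blinfun_apply_id_blinfun axis_eq_0_iff one_neq_zero)
qed
end

instance endo :: (finite) banach
proof
  fix X :: "nat \<Rightarrow> 'a endo"
  have dist_Rep: "dist a b = dist (Rep_endo a) (Rep_endo b)" for a b :: "'a endo"
    by (simp add: dist_endo_def dist_norm norm_endo.rep_eq minus_endo.rep_eq)
  assume "Cauchy X"
  then have "Cauchy (\<lambda>n. Rep_endo (X n))"
    unfolding Cauchy_def dist_Rep .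
  then obtain L where "(\<lambda>n. Rep_endo (X n)) \<longlonglongrightarrow> L"
    using convergent_eq_Cauchy convergent_def by blast
  then have "X \<longlonglongrightarrow> Abs_endo L"
    unfolding tendsto_iff dist_Rep by (simp add: Abs_endo_inverse)
  then show "convergent X" unfolding convergent_def by blast
qed

definition endo_apply :: "'n::finite endo \<Rightarrow> real^'n \<Rightarrow> real^'n" where
  "endo_apply X = blinfun_apply (Rep_endo X)"

definition endo_of_matrix :: "real^'n^'n \<Rightarrow> 'n::finite endo" where
  "endo_of_matrix A = Abs_endo (Blinfun (\<lambda>v. A *v v))"

lemma endo_apply_endo_of_matrix [simp]: "endo_apply (endo_of_matrix A) v = A *v v"
  by (simp add: endo_apply_def endo_of_matrix_def Abs_endo_inverse bounded_linear_Blinfun_apply)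

lemma endo_apply_mult [simp]: "endo_apply (X * Y) v = endo_apply X (endo_apply Y v)"
  by (simp add: endo_apply_def times_endo.rep_eq)

lemma endo_apply_one [simp]: "endo_apply 1 v = v"
  by (simp add: endo_apply_def one_endo.rep_eq)

lemma endo_apply_add [simp]: "endo_apply (X + Y) v = endo_apply X v + endo_apply Y v"
  by (simp add: endo_apply_def plus_endo.rep_eq blinfun.add_left)

lemma endo_apply_scaleR [simp]: "endo_apply (r *\<^sub>R X) v = r *\<^sub>R endo_apply X v"
  by (simp add: endo_apply_def scaleR_endo.rep_eq blinfun.scaleR_left)

lemma endo_eqI: "(\<And>v. endo_apply X v = endo_apply Y v) \<Longrightarrow> X = Y"
  unfolding endo_apply_def by (metis Rep_endo_inject blinfun_eqI)

lemma endo_apply_power: "endo_apply (endo_of_matrix A ^ n) v = mpow A n *v v"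
  by (induction n) (simp_all add: mpow_def matrix_vector_mul_assoc)

lemma bounded_linear_endo_apply: "bounded_linear (\<lambda>X::'n::finite endo. endo_apply X v)"
proof -
  have "bounded_linear (Rep_endo :: 'n endo \<Rightarrow> _)"
    by (rule bounded_linear_intro[of _ 1]) (auto simp: plus_endo.rep_eq scaleR_endo.rep_eq norm_endo.rep_eq)
  then show ?thesis
    unfolding endo_apply_def by (rule bounded_linear_compose[OF blinfun.bounded_linear_left])
qed

lemma endo_apply_linear: "linear (endo_apply X)"
  unfolding endo_apply_def by (rule bounded_linear.linear[OF blinfun.bounded_linear_right])

lemma exp_endo_entry_sums:
  "(\<lambda>n. t ^ n / fact n * mpow A n $ a $ b) sums endo_apply (exp (t *\<^sub>R endo_of_matrix A)) (axis b 1) $ a"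
proof -
  let ?\<psi> = "\<lambda>X. endo_apply X (axis b 1) $ a"
  have bl: "bounded_linear ?\<psi>"
    by (rule bounded_linear_compose[OF bounded_linear_vec_nth bounded_linear_endo_apply])
  have "(\<lambda>n. ?\<psi> ((t *\<^sub>R endo_of_matrix A) ^ n /\<^sub>R fact n)) sums ?\<psi> (exp (t *\<^sub>R endo_of_matrix A))"
    by (rule bounded_linear.sums[OF bl exp_converges])
  moreover have "?\<psi> ((t *\<^sub>R endo_of_matrix A) ^ n /\<^sub>R fact n) = t ^ n / fact n * mpow A n $ a $ b" for n
    using real_vector.linear_scale[OF bounded_linear.linear[OF bl]]
    by (simp add: endo_apply_power matrix_vector_mult_basis column_def field_simps)
  ultimately show ?thesis by simp
qed

lemma mexp_entry: "mexp t A $ a $ b = endo_apply (exp (t *\<^sub>R endo_of_matrix A)) (axis b 1) $ a"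
  unfolding mexp_def using sums_unique[OF exp_endo_entry_sums[of t A a b]] by simp

lemma mexp_entry_sums: "(\<lambda>n. t ^ n / fact n * mpow A n $ a $ b) sums mexp t A $ a $ b"
  unfolding mexp_entry by (rule exp_endo_entry_sums)

lemma mexp_mult_vec: "mexp t A *v v = endo_apply (exp (t *\<^sub>R endo_of_matrix A)) v"
proof -
  let ?E = "endo_apply (exp (t *\<^sub>R endo_of_matrix A))"
  have "?E v = ?E (\<Sum>b\<in>UNIV. v $ b *\<^sub>R axis b 1)"
    using basis_expansion[of v] by (simp add: scalar_mult_eq_scaleR)
  also have "\<dots> = (\<Sum>b\<in>UNIV. v $ b *\<^sub>R ?E (axis b 1))"
    by (simp add: linear_sum[OF endo_apply_linear] linear_scale[OF endo_apply_linear])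
  finally show ?thesis
    by (simp add: vec_eq_iff matrix_vector_mult_def mexp_entry sum_component mult.commute)
qed

lemma mexp_zero [simp]: "mexp 0 A = mat 1"
  by (simp add: matrix_eq mexp_mult_vec)

lemma mexp_add: "mexp (s + t) A = mexp s A ** mexp t A"
  by (simp add: matrix_eq mexp_mult_vec scaleR_add_left exp_add_commuting flip: matrix_vector_mul_assoc)

lemma mexp_commute: "A *v (mexp t A *v v) = mexp t A *v (A *v v)"
proof -
  have "endo_of_matrix A * exp (t *\<^sub>R endo_of_matrix A) = exp (t *\<^sub>R endo_of_matrix A) * endo_of_matrix A"
    by (simp add: exp_times_scaleR_commute)
  then have "endo_apply (endo_of_matrix A * exp (t *\<^sub>R endo_of_matrix A)) v
      = endo_apply (exp (t *\<^sub>R endo_of_matrix A) * endo_of_matrix A) v"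
    by simp
  then show ?thesis
    by (simp add: mexp_mult_vec)
qed

lemma mexp_has_vector_derivative:
  "((\<lambda>t. mexp t A *v v) has_vector_derivative A *v (mexp t A *v v)) (at t within S)"
proof -
  have "((\<lambda>t. exp (t *\<^sub>R endo_of_matrix A)) has_vector_derivative
      endo_of_matrix A * exp (t *\<^sub>R endo_of_matrix A)) (at t within S)"
    using exp_scaleR_has_vector_derivative_right[of "endo_of_matrix A" t S]
    by (simp add: exp_times_scaleR_commute)
  from bounded_linear.has_vector_derivative[OF bounded_linear_endo_apply this]
  show ?thesis by (simp add: mexp_mult_vec)
qed

lemma mexp_add_scalar: "mexp t (A + c *\<^sub>R mat 1) = exp (t * c) *\<^sub>R mexp t A"
proof -
  let ?B = "endo_of_matrix A" and ?e = "\<lambda>r. r *\<^sub>R (1 :: 'a endo)"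
  have "endo_of_matrix (A + c *\<^sub>R mat 1) = ?B + ?e c"
    by (rule endo_eqI) (simp add: matrix_vector_mult_add_rdistrib flip: scaleR_matrix_vector_assoc)
  then have "t *\<^sub>R endo_of_matrix (A + c *\<^sub>R mat 1) = t *\<^sub>R ?B + ?e (t * c)"
    by (simp add: scaleR_add_right)
  then have "exp (t *\<^sub>R endo_of_matrix (A + c *\<^sub>R mat 1)) = exp (t *\<^sub>R ?B) * exp (?e (t * c))"
    by (simp add: exp_add_commuting)
  also have "exp (?e (t * c)) = ?e (exp (t * c))"
    using exp_of_real[of "t * c"] by (simp add: of_real_def)
  finally show ?thesis
    by (simp add: matrix_eq mexp_mult_vec flip: scaleR_matrix_vector_assoc)
qed

lemma mexp_mult_vec_kernel:
  assumes "A *v v = 0"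
  shows "mexp t A *v v = v"
proof -
  have "((\<lambda>t. mexp t A *v v) has_vector_derivative 0) (at t)" for t
    using mexp_has_vector_derivative[of A v t UNIV] by (simp add: mexp_commute assms)
  from vector_derivative_zero_imp_constant[OF this] show ?thesis
    by (metis matrix_vector_mul_lid mexp_zero)
qed

lemma sum_axis_1 [simp]: "(\<Sum>a\<in>UNIV. axis b 1 $ a) = (1::real)"
  by (simp add: axis_def)

lemma sum_mult_vec_zero_colsum:
  fixes A :: "real^'n::finite^'n"
  assumes "\<And>b. (\<Sum>a\<in>UNIV. A $ a $ b) = 0"
  shows "(\<Sum>a\<in>UNIV. (A *v v) $ a) = 0"
proof -
  have "(\<Sum>a\<in>UNIV. (A *v v) $ a) = (\<Sum>b\<in>UNIV. (\<Sum>a\<in>UNIV. A $ a $ b) * v $ b)"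
    by (simp add: matrix_vector_mult_def sum_distrib_right) (rule sum.swap)
  then show ?thesis using assms by simp
qed

lemma sum_mexp_mult_vec_zero_colsum:
  fixes A :: "real^'n::finite^'n"
  assumes "\<And>b. (\<Sum>a\<in>UNIV. A $ a $ b) = 0"
  shows "(\<Sum>a\<in>UNIV. (mexp t A *v v) $ a) = (\<Sum>a\<in>UNIV. v $ a)"
proof -
  have bl: "bounded_linear (\<lambda>w::real^'n. \<Sum>a\<in>UNIV. w $ a)"
    by (intro bounded_linear_sum bounded_linear_vec_nth)
  have "((\<lambda>t. \<Sum>a\<in>UNIV. (mexp t A *v v) $ a) has_vector_derivative 0) (at t)" for t
    using bounded_linear.has_vector_derivative[OF bl mexp_has_vector_derivative[of A v t UNIV]]
    by (simp add: sum_mult_vec_zero_colsum[OF assms])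
  from vector_derivative_zero_imp_constant[OF this] show ?thesis
    by (metis matrix_vector_mul_lid mexp_zero)
qed

section \<open>Positivity of the exponential of a rate matrix\<close>

lemma mpow_nonneg:
  assumes "\<And>a b. 0 \<le> M $ a $ b"
  shows "0 \<le> mpow M n $ a $ b"
  using assms
  by (induction n arbitrary: a b)
     (auto simp: mpow_def mat_def matrix_matrix_mult_def intro!: sum_nonneg)

lemma mpow_pos_if_reachable:
  assumes nonneg: "\<And>a b. 0 \<le> M $ a $ b"
    and reach: "(b, a) \<in> {(y, x). x \<noteq> y \<and> M $ x $ y > 0}\<^sup>*"
  shows "\<exists>n. 0 < mpow M n $ a $ b"
  using reach
proof (induction rule: rtrancl_induct)
  case base
  have "0 < mpow M 0 $ b $ b" by (simp add: mpow_def mat_def)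
  then show ?case ..
next
  case (step y z)
  then obtain n where n: "0 < mpow M n $ y $ b" by blast
  from step have "0 < M $ z $ y" by simp
  with n have "0 < M $ z $ y * mpow M n $ y $ b" by simp
  also have "\<dots> \<le> (\<Sum>d\<in>UNIV. M $ z $ d * mpow M n $ d $ b)"
    by (rule member_le_sum) (auto simp: nonneg mpow_nonneg)
  also have "\<dots> = mpow M (Suc n) $ z $ b"
    by (simp add: mpow_def matrix_matrix_mult_def)
  finally show ?case ..
qed

lemma mexp_pos_if_mpow_pos:
  assumes "\<And>a b. 0 \<le> M $ a $ b" and "0 < t" and "0 < mpow M n $ a $ b"
  shows "0 < mexp t M $ a $ b"
proof -
  have "0 < (\<Sum>n. t ^ n / fact n * mpow M n $ a $ b)"
    by (rule suminf_pos2[where i = n])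
       (use assms mpow_nonneg[of M] sums_summable[OF mexp_entry_sums] in auto)
  then show ?thesis
    using sums_unique[OF mexp_entry_sums] by metis
qed

lemma rate_matrix_colsum: "rate_matrix R \<Longrightarrow> (\<Sum>a\<in>UNIV. R $ a $ b) = 0"
  unfolding rate_matrix_def using sum.remove[of UNIV b "\<lambda>a. R $ a $ b"] by simp

lemma mexp_nonneg:
  assumes "\<And>a b. 0 \<le> M $ a $ b" and "0 \<le> t"
  shows "0 \<le> mexp t M $ a $ b"
proof -
  have "0 \<le> (\<Sum>n. t ^ n / fact n * mpow M n $ a $ b)"
    by (rule suminf_nonneg) (use assms mpow_nonneg[of M] sums_summable[OF mexp_entry_sums] in auto)
  then show ?thesis
    using sums_unique[OF mexp_entry_sums] by metis
qed

lemma rate_matrix_shift: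
  assumes "rate_matrix R"
  obtains c where "\<And>a b. 0 \<le> (R + c *\<^sub>R mat 1) $ a $ b"
    and "\<And>t. mexp t R = exp (- (t * c)) *\<^sub>R mexp t (R + c *\<^sub>R mat 1)"
proof -
  let ?c = "\<Sum>b\<in>UNIV. \<bar>R $ b $ b\<bar>"
  have "0 \<le> (R + ?c *\<^sub>R mat 1) $ a $ b" for a b
  proof (cases "a = b")
    case True
    have "\<bar>R $ b $ b\<bar> \<le> ?c" by (rule member_le_sum) auto
    then show ?thesis using True by (simp add: mat_def)
  next
    case False
    then show ?thesis using assms by (simp add: mat_def rate_matrix_def)
  qed
  moreover have "mexp t R = exp (- (t * ?c)) *\<^sub>R mexp t (R + ?c *\<^sub>R mat 1)" for t
    using mexp_add_scalar[of t "R + ?c *\<^sub>R mat 1" "- ?c"] by simp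
  ultimately show ?thesis
    using that by blast
qed

lemma mexp_rate_matrix_nonneg:
  assumes "rate_matrix R" and "0 \<le> t"
  shows "0 \<le> mexp t R $ a $ b"
proof -
  obtain c where "\<And>a b. 0 \<le> (R + c *\<^sub>R mat 1) $ a $ b"
    and "mexp t R = exp (- (t * c)) *\<^sub>R mexp t (R + c *\<^sub>R mat 1)"
    using rate_matrix_shift[OF assms(1)] by metis
  then show ?thesis
    using mexp_nonneg[of "R + c *\<^sub>R mat 1", OF _ \<open>0 \<le> t\<close>] by simp
qed

lemma mexp_rate_matrix_pos:
  assumes rate: "rate_matrix R" and irr: "irreducible_rates R" and "0 < t"
  shows "0 < mexp t R $ a $ b"
proof -
  obtain c where nonneg: "\<And>a b. 0 \<le> (R + c *\<^sub>R mat 1) $ a $ b"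
    and shift: "mexp t R = exp (- (t * c)) *\<^sub>R mexp t (R + c *\<^sub>R mat 1)"
    using rate_matrix_shift[OF rate] by metis
  let ?M = "R + c *\<^sub>R mat 1"
  have "{(y, x). x \<noteq> y \<and> ?M $ x $ y > 0} = {(y, x). x \<noteq> y \<and> R $ x $ y > 0}"
    by (auto simp: mat_def)
  then obtain n where "0 < mpow ?M n $ a $ b"
    using mpow_pos_if_reachable[OF nonneg] irr unfolding irreducible_rates_def by metis
  then have "0 < mexp t ?M $ a $ b"
    using mexp_pos_if_mpow_pos[OF nonneg \<open>0 < t\<close>] by blast
  then show ?thesis
    by (simp add: shift)
qed

lemma mexp_rate_matrix_colsum:
  assumes "rate_matrix R"
  shows "(\<Sum>a\<in>UNIV. mexp t R $ a $ b) = 1"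
  using sum_mexp_mult_vec_zero_colsum[OF rate_matrix_colsum[OF assms], of t "axis b 1"]
  by (simp add: matrix_vector_mult_basis column_def)

section \<open>Convergence to equilibrium\<close>

definition l1_norm :: "real^'n::finite \<Rightarrow> real" where
  "l1_norm v = (\<Sum>a\<in>UNIV. \<bar>v $ a\<bar>)"

lemma l1_norm_nonneg: "0 \<le> l1_norm v"
  unfolding l1_norm_def by (simp add: sum_nonneg)

lemma l1_norm_eq_0_iff: "l1_norm v = 0 \<longleftrightarrow> v = 0"
  unfolding l1_norm_def by (simp add: sum_nonneg_eq_0_iff vec_eq_iff)

lemma l1_norm_mult_vec_le:
  fixes P :: "real^'n::finite^'n"
  assumes "\<And>a b. e \<le> P $ a $ b" and "\<And>b. (\<Sum>a\<in>UNIV. P $ a $ b) = 1"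
    and "(\<Sum>a\<in>UNIV. v $ a) = 0"
  shows "l1_norm (P *v v) \<le> (1 - real CARD('n) * e) * l1_norm v"
proof -
  have "(P *v v) $ a = (\<Sum>b\<in>UNIV. (P $ a $ b - e) * v $ b)" for a
    using assms(3)
    by (simp add: matrix_vector_mult_def left_diff_distrib sum_subtractf flip: sum_distrib_left)
  then have "l1_norm (P *v v) = (\<Sum>a\<in>UNIV. \<bar>\<Sum>b\<in>UNIV. (P $ a $ b - e) * v $ b\<bar>)"
    by (simp add: l1_norm_def)
  also have "\<dots> \<le> (\<Sum>a\<in>UNIV. \<Sum>b\<in>UNIV. (P $ a $ b - e) * \<bar>v $ b\<bar>)"
    by (intro sum_mono order_trans[OF sum_abs]) (simp add: abs_mult assms(1))
  also have "\<dots> = (\<Sum>b\<in>UNIV. (\<Sum>a\<in>UNIV. P $ a $ b - e) * \<bar>v $ b\<bar>)"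
    by (subst sum.swap) (simp add: sum_distrib_right)
  also have "\<dots> = (1 - real CARD('n) * e) * l1_norm v"
    by (simp add: sum_subtractf assms(2) l1_norm_def sum_distrib_left)
  finally show ?thesis .
qed

lemma mexp_rate_matrix_contracts:
  fixes R :: "real^'n::finite^'n"
  assumes rate: "rate_matrix R" and irr: "irreducible_rates R"
  obtains \<rho> where "0 < \<rho>" "\<rho> < 1"
    "\<And>v t n. (\<Sum>a\<in>UNIV. v $ a) = 0 \<Longrightarrow> real n \<le> t \<Longrightarrow>
      l1_norm (mexp t R *v v) \<le> \<rho> ^ n * l1_norm v"
proof -
  define e where "e = Min (range (\<lambda>(a, b). mexp 1 R $ a $ b))"
  have "0 < e"
    unfolding e_def using mexp_rate_matrix_pos[OF rate irr] by (subst Min_gr_iff) auto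
  have e_le: "e \<le> mexp 1 R $ a $ b" for a b
    unfolding e_def by (rule Min_le) auto
  \<comment> \<open>1 - N e may be 0; taking the maximum keeps \<rho> positive\<close>
  define \<rho> where "\<rho> = max (1 - real CARD('n) * e) (1 / 2)"
  have "0 < \<rho>" "\<rho> < 1"
    unfolding \<rho>_def using \<open>0 < e\<close> by auto
  moreover have "l1_norm (mexp t R *v v) \<le> \<rho> ^ n * l1_norm v"
    if v: "(\<Sum>a\<in>UNIV. v $ a) = 0" and "real n \<le> t" for v t n
    using \<open>real n \<le> t\<close>
  proof (induction n arbitrary: t)
    case 0
    then show ?case
      using l1_norm_mult_vec_le[of 0 "mexp t R" v] v
        mexp_rate_matrix_nonneg[OF rate] mexp_rate_matrix_colsum[OF rate]
      by simp
  next
    case (Suc n)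
    let ?w = "mexp (t - 1) R *v v"
    have w_sum: "(\<Sum>a\<in>UNIV. ?w $ a) = 0"
      using sum_mexp_mult_vec_zero_colsum[OF rate_matrix_colsum[OF rate]] v by simp
    have "mexp t R *v v = mexp 1 R *v ?w"
      using mexp_add[of 1 "t - 1" R] by (simp add: matrix_vector_mul_assoc)
    then have "l1_norm (mexp t R *v v) \<le> (1 - real CARD('n) * e) * l1_norm ?w"
      using l1_norm_mult_vec_le[OF e_le mexp_rate_matrix_colsum[OF rate] w_sum] by simp
    also have "\<dots> \<le> \<rho> * l1_norm ?w"
      unfolding \<rho>_def by (intro mult_right_mono l1_norm_nonneg) auto
    also have "\<dots> \<le> \<rho> * (\<rho> ^ n * l1_norm v)"
      using Suc \<open>0 < \<rho>\<close> by (intro mult_left_mono) auto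
    finally show ?case by simp
  qed
  ultimately show ?thesis using that by blast
qed

lemma rate_matrix_kernel_sum_zero:
  assumes rate: "rate_matrix R" and irr: "irreducible_rates R"
    and "R *v v = 0" and "(\<Sum>a\<in>UNIV. v $ a) = 0"
  shows "v = 0"
proof -
  obtain \<rho> where "\<rho> < 1"
    and contr: "l1_norm (mexp 1 R *v v) \<le> \<rho> ^ 1 * l1_norm v"
    using mexp_rate_matrix_contracts[OF rate irr] assms(4) by (metis of_nat_1 order_refl)
  then have "l1_norm v \<le> \<rho> * l1_norm v"
    using mexp_mult_vec_kernel[OF assms(3)] by simp
  with \<open>\<rho> < 1\<close> l1_norm_nonneg[of v] have "l1_norm v = 0"
    by (smt (verit) mult_le_cancel_right1)
  then show ?thesis by (simp add: l1_norm_eq_0_iff)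
qed

lemma rate_matrix_solution_unique:
  assumes "rate_matrix R" and "irreducible_rates R"
    and "R *v v = R *v w" and "(\<Sum>a\<in>UNIV. v $ a) = (\<Sum>a\<in>UNIV. w $ a)"
  shows "v = w"
  using rate_matrix_kernel_sum_zero[OF assms(1,2), of "v - w"] assms(3,4)
  by (simp add: matrix_vector_mult_diff_distrib sum_subtractf)

lemma rate_matrix_singular:
  assumes "rate_matrix R"
  obtains p where "R *v p = 0" and "p \<noteq> 0"
proof -
  have "\<not> (\<forall>x. R *v x = 0 \<longrightarrow> x = 0)"
  proof
    assume "\<forall>x. R *v x = 0 \<longrightarrow> x = 0"
    then obtain B where "B ** R = mat 1"
      using matrix_left_invertible_ker by blast
    then have "R ** B = mat 1"
      using matrix_left_right_inverse by blast
    have "vec 1 v* R = (0 :: real^'a)"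
      using rate_matrix_colsum[OF assms] by (simp add: vec_eq_iff vector_matrix_mult_def)
    then have "(vec 1 :: real^'a) = 0"
      by (metis \<open>R ** B = mat 1\<close> vector_matrix_mul_assoc vector_matrix_mul_rid vector_matrix_mult_0)
    then show False by (simp add: vec_eq_iff)
  qed
  then show ?thesis
    using that by blast
qed

lemma stat_dist_stationary:
  assumes rate: "rate_matrix R" and irr: "irreducible_rates R"
  shows "R *v stat_dist R = 0" and "(\<Sum>a\<in>UNIV. stat_dist R $ a) = 1"
proof -
  obtain p where "R *v p = 0" and "p \<noteq> 0"
    using rate_matrix_singular[OF rate] .
  define s where "s = (\<Sum>a\<in>UNIV. p $ a)"
  have "s \<noteq> 0"
    using rate_matrix_kernel_sum_zero[OF rate irr \<open>R *v p = 0\<close>] \<open>p \<noteq> 0\<close> unfolding s_def by blast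
  define q where "q = (1 / s) *\<^sub>R p"
  have q: "R *v q = 0 \<and> (\<Sum>a\<in>UNIV. q $ a) = 1"
    using \<open>R *v p = 0\<close> \<open>s \<noteq> 0\<close>
    by (simp add: q_def matrix_vector_mult_scaleR s_def flip: sum_divide_distrib)
  have "stat_dist R = q"
    unfolding stat_dist_def
  proof (rule the_equality)
    show "R *v x = 0 \<and> sum (($) x) UNIV = 1 \<Longrightarrow> x = q" for x
      using rate_matrix_solution_unique[OF rate irr, of x q] q by simp
  qed (use q in simp)
  with q show "R *v stat_dist R = 0" and "(\<Sum>a\<in>UNIV. stat_dist R $ a) = 1"
    by simp_all
qed

lemma mexp_rate_matrix_decay:
  fixes R :: "real^'n::finite^'n"
  assumes rate: "rate_matrix R" and irr: "irreducible_rates R"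
  obtains C \<alpha> where "0 < \<alpha>"
    "\<And>v t. (\<Sum>a\<in>UNIV. v $ a) = 0 \<Longrightarrow> 0 \<le> t \<Longrightarrow>
      norm (mexp t R *v v) \<le> C * l1_norm v * exp (- \<alpha> * t)"
proof -
  obtain \<rho> where \<rho>: "0 < \<rho>" "\<rho> < 1"
    and contr: "\<And>v t n. (\<Sum>a\<in>UNIV. v $ a) = 0 \<Longrightarrow> real n \<le> t \<Longrightarrow>
      l1_norm (mexp t R *v v) \<le> \<rho> ^ n * l1_norm v"
    using mexp_rate_matrix_contracts[OF rate irr] by blast
  have "norm (mexp t R *v v) \<le> (1 / \<rho>) * l1_norm v * exp (- (- ln \<rho>) * t)"
    if v: "(\<Sum>a\<in>UNIV. v $ a) = 0" and "0 \<le> t" for v t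
  proof -
    define n where "n = nat \<lfloor>t\<rfloor>"
    have "real n \<le> t" "t - 1 \<le> real n"
      unfolding n_def using \<open>0 \<le> t\<close> by linarith+
    have "norm (mexp t R *v v) \<le> l1_norm (mexp t R *v v)"
      unfolding l1_norm_def by (rule norm_le_l1_cart)
    also have "\<dots> \<le> \<rho> ^ n * l1_norm v"
      by (rule contr[OF v \<open>real n \<le> t\<close>])
    also have "\<rho> ^ n = exp (real n * ln \<rho>)"
      using \<rho>(1) by (simp add: exp_of_nat_mult)
    also have "\<dots> \<le> exp ((t - 1) * ln \<rho>)"
      using \<open>t - 1 \<le> real n\<close> \<rho> by (intro exp_mono mult_right_mono_neg) auto
    also have "exp ((t - 1) * ln \<rho>) = (1 / \<rho>) * exp (- (- ln \<rho>) * t)"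
      using \<rho>(1) by (simp add: algebra_simps exp_diff)
    finally show ?thesis
      using l1_norm_nonneg[of v] by (simp add: mult_right_mono mult_ac)
  qed
  moreover have "0 < - ln \<rho>"
    using \<rho> by simp
  ultimately show ?thesis
    using that by blast
qed

lemma mexp_rate_matrix_integrable:
  fixes R :: "real^'n::finite^'n"
  assumes rate: "rate_matrix R" and irr: "irreducible_rates R" and v: "(\<Sum>a\<in>UNIV. v $ a) = 0"
  shows "(\<lambda>t. mexp t R *v v) absolutely_integrable_on {0..}"
    and "((\<lambda>t. mexp t R *v v) \<longlongrightarrow> 0) at_top"
proof -
  obtain C \<alpha> where "0 < \<alpha>"
    and decay: "\<And>t. 0 \<le> t \<Longrightarrow> norm (mexp t R *v v) \<le> C * l1_norm v * exp (- \<alpha> * t)"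
    using mexp_rate_matrix_decay[OF rate irr] v by metis
  show "(\<lambda>t. mexp t R *v v) absolutely_integrable_on {0..}"
  proof (rule measurable_bounded_by_integrable_imp_absolutely_integrable)
    show "(\<lambda>t. mexp t R *v v) \<in> borel_measurable (lebesgue_on {0..})"
      using mexp_has_vector_derivative
      by (intro continuous_imp_measurable_on_sets_lebesgue continuous_on_vector_derivative) auto
    show "(\<lambda>t. C * l1_norm v * exp (- \<alpha> * t)) integrable_on {0..}"
      using integrable_on_cmult_left[OF integrable_on_exp_minus_to_infinity[OF \<open>0 < \<alpha>\<close>],
          of "C * l1_norm v" 0]
      by simp
  qed (use decay in auto)
  have "((\<lambda>t. C * l1_norm v * exp (- \<alpha> * t)) \<longlongrightarrow> 0) at_top"
    using \<open>0 < \<alpha>\<close> by real_asymp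
  then show "((\<lambda>t. mexp t R *v v) \<longlongrightarrow> 0) at_top"
    by (rule Lim_null_comparison[rotated]) (use decay in \<open>auto intro: eventually_at_top_linorderI\<close>)
qed

section \<open>The fundamental matrix\<close>

definition fund_col_diff :: "real^'n::finite^'n \<Rightarrow> 'n \<Rightarrow> 'n \<Rightarrow> real^'n" where
  "fund_col_diff R i j = (\<chi> k. fund_matrix R $ k $ i - fund_matrix R $ k $ j)"

lemma fund_col_diff_nth [simp]: "fund_col_diff R i j $ k = fund_matrix R $ k $ i - fund_matrix R $ k $ j"
  by (simp add: fund_col_diff_def)

lemma fund_col_diff_equation:
  fixes R :: "real^'n::finite^'n" and i j :: 'n
  assumes rate: "rate_matrix R" and irr: "irreducible_rates R"
  defines "w \<equiv> fund_col_diff R i j"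
  shows "R *v w = - (axis i 1 - axis j 1)" and "(\<Sum>a\<in>UNIV. w $ a) = 0"
proof -
  let ?\<pi> = "stat_dist R" and ?u = "axis i 1 - axis j 1 :: real^'n"
  have int: "(\<lambda>t. mexp t R *v v) absolutely_integrable_on {0..}" if "(\<Sum>a\<in>UNIV. v $ a) = 0" for v
    by (rule mexp_rate_matrix_integrable(1)[OF rate irr that])
  have integrable: "(\<lambda>t. mexp t R *v (axis b 1 - ?\<pi>)) integrable_on {0..}" for b
  proof -
    have "(\<Sum>a\<in>UNIV. (axis b 1 - ?\<pi>) $ a) = 0"
      using stat_dist_stationary(2)[OF rate irr] by (simp add: sum_subtractf)
    then show ?thesis
      using int set_lebesgue_integral_eq_integral(1) by blast
  qed
  have column: "fund_matrix R $ a $ b = integral {0..} (\<lambda>t. mexp t R *v (axis b 1 - ?\<pi>)) $ a" for a b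
  proof -
    have "mexp t R $ a $ b - ?\<pi> $ a = (mexp t R *v (axis b 1 - ?\<pi>)) $ a" for t
      by (simp add: matrix_vector_mult_diff_distrib matrix_vector_mult_basis column_def
          mexp_mult_vec_kernel[OF stat_dist_stationary(1)[OF rate irr]])
    then show ?thesis
      by (simp add: fund_matrix_def integrable)
  qed
  have "w = integral {0..} (\<lambda>t. mexp t R *v (axis i 1 - ?\<pi>)) - integral {0..} (\<lambda>t. mexp t R *v (axis j 1 - ?\<pi>))"
    by (simp add: w_def vec_eq_iff column)
  also have "\<dots> = integral {0..} (\<lambda>t. mexp t R *v ?u)"
    by (simp add: integrable flip: integral_diff matrix_vector_mult_diff_distrib)
  finally have w: "w = integral {0..} (\<lambda>t. mexp t R *v ?u)" .
  have sum_u: "(\<Sum>a\<in>UNIV. ?u $ a) = 0"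
    by (simp add: sum_subtractf)
  have int_u: "(\<lambda>t. mexp t R *v ?u) integrable_on {0..}"
    using int[OF sum_u] set_lebesgue_integral_eq_integral(1) by blast
  have "R *v w = integral {0..} (\<lambda>t. R *v (mexp t R *v ?u))"
    unfolding w using integral_linear[OF int_u matrix_vector_mul_bounded_linear[of R]] by (simp add: o_def)
  also have "\<dots> = 0 - mexp 0 R *v ?u"
  proof (rule integral_atLeast_has_vector_derivative)
    show "(\<lambda>t. R *v (mexp t R *v ?u)) absolutely_integrable_on {0..}"
      using int[OF sum_mult_vec_zero_colsum[OF rate_matrix_colsum[OF rate]]] by (simp add: mexp_commute)
  qed (simp_all add: mexp_has_vector_derivative mexp_rate_matrix_integrable(2)[OF rate irr sum_u])
  finally show "R *v w = - ?u"
    by simp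
  have "bounded_linear (\<lambda>v::real^'n. \<Sum>a\<in>UNIV. v $ a)"
    by (intro bounded_linear_sum bounded_linear_vec_nth)
  from integral_linear[OF int_u this]
  have "(\<Sum>a\<in>UNIV. w $ a) = integral {0..} (\<lambda>t. \<Sum>a\<in>UNIV. (mexp t R *v ?u) $ a)"
    unfolding w o_def by simp
  also have "\<dots> = 0"
    by (simp only: sum_mexp_mult_vec_zero_colsum[OF rate_matrix_colsum[OF rate]] sum_u) simp
  finally show "(\<Sum>a\<in>UNIV. w $ a) = 0" .
qed

section \<open>Varying one rate\<close>

lemma vary_rate_offdiag:
  "a \<noteq> b \<Longrightarrow> vary_rate R0 i j x $ a $ b = (if a = i \<and> b = j then x else R0 $ a $ b)"
  by (auto simp: vary_rate_def)

lemma vary_rate_diag: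
  "i \<noteq> j \<Longrightarrow> vary_rate R0 i j x $ b $ b = R0 $ b $ b + (if b = j then R0 $ i $ j - x else 0)"
  by (simp add: vary_rate_def)

lemma rate_matrix_vary_rate:
  assumes rate: "rate_matrix R0" and "i \<noteq> j" and "0 \<le> x"
  shows "rate_matrix (vary_rate R0 i j x)"
  unfolding rate_matrix_def
proof (intro conjI allI impI)
  fix a b :: 'a
  assume "a \<noteq> b"
  then show "0 \<le> vary_rate R0 i j x $ a $ b"
    using rate \<open>0 \<le> x\<close> by (simp add: vary_rate_offdiag rate_matrix_def)
next
  fix b
  have "(\<Sum>a\<in>UNIV - {b}. vary_rate R0 i j x $ a $ b)
      = (\<Sum>a\<in>UNIV - {b}. R0 $ a $ b + (if a = i \<and> b = j then x - R0 $ i $ j else 0))"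
    by (rule sum.cong) (auto simp: vary_rate_offdiag)
  also have "\<dots> = (\<Sum>a\<in>UNIV - {b}. R0 $ a $ b) + (if b = j then x - R0 $ i $ j else 0)"
    using \<open>i \<noteq> j\<close> by (simp add: sum.distrib)
  finally show "vary_rate R0 i j x $ b $ b = - (\<Sum>a\<in>UNIV - {b}. vary_rate R0 i j x $ a $ b)"
    using rate \<open>i \<noteq> j\<close> by (simp add: rate_matrix_def vary_rate_diag)
qed

lemma irreducible_rates_vary_rate:
  assumes "irreducible_rates R0" and "0 < R0 $ i $ j" and "0 < x"
  shows "irreducible_rates (vary_rate R0 i j x)"
proof -
  have "{(b, a). a \<noteq> b \<and> vary_rate R0 i j x $ a $ b > 0} = {(b, a). a \<noteq> b \<and> R0 $ a $ b > 0}"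
    using assms(2,3) by (auto simp: vary_rate_offdiag split: if_splits)
  then show ?thesis
    using assms(1) unfolding irreducible_rates_def by simp
qed

lemma vary_rate_mult_vec:
  assumes "i \<noteq> j"
  shows "vary_rate R0 i j y *v v = vary_rate R0 i j x *v v + ((y - x) * v $ j) *\<^sub>R (axis i 1 - axis j 1)"
proof -
  have "vary_rate R0 i j y $ a $ b * v $ b = vary_rate R0 i j x $ a $ b * v $ b
      + (if b = j then (y - x) * v $ j * (axis i 1 - axis j 1) $ a else 0)" for a b
    using assms by (auto simp: vary_rate_def axis_def algebra_simps)
  then show ?thesis
    by (simp add: vec_eq_iff matrix_vector_mult_def sum.distrib)
qed

lemma fund_col_diff_vary_rate:
  fixes R0 :: "real^'n::finite^'n"
  assumes rate: "rate_matrix R0" and irr: "irreducible_rates R0" and "0 < R0 $ i $ j" and "i \<noteq> j"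
    and "0 < x" and "0 < y"
  defines "W \<equiv> \<lambda>z. fund_col_diff (vary_rate R0 i j z) i j"
  shows "1 - (y - x) * W x $ j \<noteq> 0"
    and "W y = (1 / (1 - (y - x) * W x $ j)) *\<^sub>R W x"
proof -
  let ?u = "axis i 1 - axis j 1 :: real^'n" and ?d = "1 - (y - x) * W x $ j"
  have vary: "rate_matrix (vary_rate R0 i j z)" "irreducible_rates (vary_rate R0 i j z)" if "0 < z" for z
    using rate_matrix_vary_rate[OF rate \<open>i \<noteq> j\<close>] irreducible_rates_vary_rate[OF irr \<open>0 < R0 $ i $ j\<close>] that
    by simp_all
  have W: "vary_rate R0 i j z *v W z = - ?u" "(\<Sum>a\<in>UNIV. W z $ a) = 0" if "0 < z" for z
    using fund_col_diff_equation[OF vary[OF that]] by (simp_all add: W_def)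
  have Wx: "vary_rate R0 i j y *v W x = - (?d *\<^sub>R ?u)"
    using vary_rate_mult_vec[OF \<open>i \<noteq> j\<close>, of R0 y "W x" x] W(1)[OF \<open>0 < x\<close>]
    by (simp add: algebra_simps)
  show "?d \<noteq> 0"
  proof
    assume "?d = 0"
    then have "W x = 0"
      using rate_matrix_kernel_sum_zero[OF vary[OF \<open>0 < y\<close>]] Wx W(2)[OF \<open>0 < x\<close>] by simp
    then have "?u = 0"
      using W(1)[OF \<open>0 < x\<close>] by simp
    then show False
      using \<open>i \<noteq> j\<close> by (auto simp: vec_eq_iff axis_def dest: spec[of _ i])
  qed
  then have "vary_rate R0 i j y *v ((1 / ?d) *\<^sub>R W x) = - ?u"
    using Wx by (simp add: matrix_vector_mult_scaleR)
  moreover have "(\<Sum>a\<in>UNIV. ((1 / ?d) *\<^sub>R W x) $ a) = 0"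
    using W(2)[OF \<open>0 < x\<close>] by (simp flip: sum_divide_distrib)
  ultimately show "W y = (1 / ?d) *\<^sub>R W x"
    using rate_matrix_solution_unique[OF vary[OF \<open>0 < y\<close>]] W[OF \<open>0 < y\<close>] by metis
qed

theorem theorem1:
  fixes R0 :: "real^'n::finite^'n" and i j k l :: 'n and x :: real
  assumes "rate_matrix R0" and "irreducible_rates R0" and "R0 $ i $ j > 0"
    and "i \<noteq> j" and "k \<noteq> i" and "k \<noteq> j" and "l \<noteq> i" and "l \<noteq> j"
    and "x > 0"
    and "fund_matrix (vary_rate R0 i j x) $ l $ i - fund_matrix (vary_rate R0 i j x) $ l $ j \<noteq> 0"
  shows "((\<lambda>y. (fund_matrix (vary_rate R0 i j y) $ k $ i - fund_matrix (vary_rate R0 i j y) $ k $ j)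
              / (fund_matrix (vary_rate R0 i j y) $ l $ i - fund_matrix (vary_rate R0 i j y) $ l $ j))
          has_real_derivative 0) (at x)"
proof -
  define W where "W z = fund_col_diff (vary_rate R0 i j z) i j" for z
  have ratio_const: "W x $ k / W x $ l = W y $ k / W y $ l" if "y \<in> {0<..}" for y
  proof -
    from that have "0 < y" by simp
    note proportional = fund_col_diff_vary_rate[OF assms(1-4,9) this, folded W_def]
    show ?thesis
      unfolding proportional(2) using proportional(1) by simp
  qed
  have "((\<lambda>y. W y $ k / W y $ l) has_real_derivative 0) (at x)"
    by (rule has_field_derivative_transform_within_open[OF DERIV_const open_greaterThan _ ratio_const])
       (use \<open>x > 0\<close> in simp)
  then show ?thesis
    by (simp add: W_def)
qed

end
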